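(* With $n,\alpha,N,L,\ell$ as below: for $0\le k\le L-1$ and $1\le i\le N-L+1$, \[ \sum_{\substack{w\in W_k^>\\ p_1(w)=i}}q^{\mathrm{quinv}'(w)}=q^{\binom{\alpha_\ell}{2}+\cdots+\binom{\alpha_{n-1}}{2}+\binom{k+1}{2}+(i-1)L}\begin{bmatrix}N-L\\ \alpha_2,\dots,\alpha_{n-1}\end{bmatrix}\begin{bmatrix}N-i\\ k,\ N-L-i+1,\ L-k-1\end{bmatrix}, \] and for $1\le k\le L$ and $1\le j\le N-L+1$, \[ \sum_{\substack{w\in W_k^{\le}\\ p_n(w)=j}}q^{\mathrm{quinv}'(w)}=q^{\binom{\alpha_\ell}{2}+\cdots+\binom{\alpha_{n-1}}{2}+\binom{k}{2}+(j-1)L}\begin{bmatrix}N-L\\ \alpha_2,\dots,\alpha_{n-1}\end{bmatrix}\begin{bmatrix}N-j\\ k-1,\ N-L-j+1,\ L-k\end{bmatrix}. \]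
   Context: $n\ge3$, $\alpha=(\alpha_2,\dots,\alpha_{n-1})$ positive integers, $|\alpha|=\sum\alpha_i$, $N>|\alpha|$, $L=N-|\alpha|$, $2\le\ell\le n$. For $0\le k\le L$, $W_k$ is the set of words $w=(w_1,\dots,w_N)$ over $\{1,\dots,n\}$ with exactly $k$ letters $n$, exactly $L-k$ letters $1$, and exactly $\alpha_i$ letters $i$ for $2\le i\le n-1$. $\mathrm{coinv}(w)=\#\{(i,j):i<j,w_i<w_j\}$, and $\mathrm{quinv}'(w)=\mathrm{coinv}(w)+\binom{\alpha_\ell}{2}+\cdots+\binom{\alpha_{n-1}}{2}+\binom{k}{2}$ for $w\in W_k$ (empty middle sum if $\ell=n$). $p_n(w)$ is the position from the left of the leftmost $n$ in $w$; $p_1(w)$ is the position counted from the right of the rightmost $1$ in the word obtained from $w$ by deleting all $n$'s. $W_k^{\le}=\{w\in W_k:p_n(w)\le p_1(w)\}$, $W_k^>=\{w\in W_k:p_n(w)>p_1(w)\}$, with conventions $W_0=W_0^>$, $W_L=W_L^{\le}$. $q$-factorials $[m]!=\prod_{s=1}^m(1+q+\cdots+q^{s-1})$; $q$-multinomial $\begin{bmatrix}m\\ \beta_1,\dots,\beta_s\end{bmatrix}=\frac{[m]!}{[\beta_1]!\cdots[\beta_s]!}$ when all $\beta_i\ge0$ and $\sum\beta_i=m$, and $0$ if some $\beta_i<0$. *)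

theory Defs
  imports "HOL-Computational_Algebra.Polynomial"
begin

definition qX :: "int poly" where "qX = [:0, 1:]"

definition qint :: "nat \<Rightarrow> int poly" where
  "qint s = (\<Sum>t<s. qX ^ t)"

definition qfact :: "nat \<Rightarrow> int poly" where
  "qfact m = (\<Prod>s=1..m. qint s)"

text \<open>q-multinomial [m; beta_1,...,beta_s] = [m]!/([beta_1]!...[beta_s]!), and 0 if some beta_i < 0.
  The quotient is exact polynomial division (the multinomial is a polynomial).\<close>
definition qmultinomial :: "int \<Rightarrow> int list \<Rightarrow> int poly" where
  "qmultinomial m \<beta> =
     (if (\<exists>b\<in>set \<beta>. b < 0) then 0
      else qfact (nat m) div (\<Prod>b\<leftarrow>\<beta>. qfact (nat b)))"

definition asum :: "nat \<Rightarrow> (nat \<Rightarrow> nat) \<Rightarrow> nat" where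
  "asum n \<alpha> = (\<Sum>i=2..n-1. \<alpha> i)"

definition Wset :: "nat \<Rightarrow> (nat \<Rightarrow> nat) \<Rightarrow> nat \<Rightarrow> nat \<Rightarrow> nat list set" where
  "Wset n \<alpha> N k = {w. length w = N \<and> set w \<subseteq> {1..n} \<and>
      count_list w n = k \<and> count_list w 1 = (N - asum n \<alpha>) - k \<and>
      (\<forall>i\<in>{2..n-1}. count_list w i = \<alpha> i)}"

definition coinv :: "nat list \<Rightarrow> nat" where
  "coinv w = card {(i, j). i < j \<and> j < length w \<and> w ! i < w ! j}"

definition quinv' :: "nat \<Rightarrow> (nat \<Rightarrow> nat) \<Rightarrow> nat \<Rightarrow> nat \<Rightarrow> nat list \<Rightarrow> nat" where
  "quinv' n \<alpha> ell k w = coinv w + (\<Sum>i=ell..n-1. \<alpha> i choose 2) + (k choose 2)"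

definition pn :: "nat \<Rightarrow> nat list \<Rightarrow> nat" where
  "pn n w = (LEAST i. i < length w \<and> w ! i = n) + 1"

definition p1 :: "nat \<Rightarrow> nat list \<Rightarrow> nat" where
  "p1 n w = (let v = rev (filter (\<lambda>x. x \<noteq> n) w) in (LEAST i. i < length v \<and> v ! i = 1) + 1)"

text \<open>W_k^<= and W_k^>, with conventions W_0 = W_0^> and W_L = W_L^<=.\<close>
definition Wle :: "nat \<Rightarrow> (nat \<Rightarrow> nat) \<Rightarrow> nat \<Rightarrow> nat \<Rightarrow> nat list set" where
  "Wle n \<alpha> N k = {w \<in> Wset n \<alpha> N k.
      k = N - asum n \<alpha> \<or> (k \<noteq> 0 \<and> pn n w \<le> p1 n w)}"

definition Wgt :: "nat \<Rightarrow> (nat \<Rightarrow> nat) \<Rightarrow> nat \<Rightarrow> nat \<Rightarrow> nat list set" where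
  "Wgt n \<alpha> N k = {w \<in> Wset n \<alpha> N k.
      k = 0 \<or> (k \<noteq> N - asum n \<alpha> \<and> pn n w > p1 n w)}"

end

theory Submission
  imports Defs
begin

text \<open>A word \<open>w \<in> W\<^sub>k\<close> is determined by three pieces: the 0/1 word marking the positions of
  its letters \<open>n\<close>, the 0/1 word marking the positions of the letters \<open>1\<close> once the \<open>n\<close>'s are
  deleted, and the word over \<open>{2..n-1}\<close> that remains. As \<open>n\<close> is the largest and \<open>1\<close> the smallest
  letter, \<open>coinv w\<close> is the sum of the coinversion numbers of the three pieces (for the positions of
  the \<open>1\<close>'s with the roles of 0 and 1 exchanged), so the generating function factorises. The
  remaining word contributes the \<open>q\<close>-multinomial coefficient. The conditions on \<open>p\<^sub>n\<close> and \<open>p\<^sub>1\<close>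
  only concern the two 0/1 words: each forces a block of zeros, possibly followed by a one, at
  one end, which contributes a power of \<open>q\<close> and leaves a free 0/1 word, counted by a \<open>q\<close>-binomial
  coefficient.\<close>

lemma coinv_Nil [simp]: "coinv [] = 0"
  by (simp add: coinv_def)

lemma coinv_Cons: "coinv (a # w) = length (filter (\<lambda>x. a < x) w) + coinv w"
proof -
  let ?S = "{(i, j). i < j \<and> j < length (a#w) \<and> (a#w) ! i < (a#w) ! j}"
  let ?A = "(\<lambda>j. (0::nat, Suc j)) ` {j. j < length w \<and> a < w ! j}"
  let ?B = "(\<lambda>(i, j). (Suc i, Suc j)) ` {(i, j). i < j \<and> j < length w \<and> w ! i < w ! j}"
  have S: "?S = ?A \<union> ?B"
  proof (rule set_eqI, rule iffI)
    fix p assume "p \<in> ?S"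
    then obtain i j where p: "p = (i, j)" "i < j" "j < Suc (length w)" "(a#w) ! i < (a#w) ! j"
      by auto
    then obtain j' where j': "j = Suc j'" by (cases j) auto
    show "p \<in> ?A \<union> ?B"
    proof (cases i)
      case (Suc i')
      then have "p = (\<lambda>(i, j). (Suc i, Suc j)) (i', j')" using p j' by simp
      moreover have "(i', j') \<in> {(i, j). i < j \<and> j < length w \<and> w ! i < w ! j}"
        using p j' Suc by auto
      ultimately show ?thesis by (intro UnI2 image_eqI)
    qed (use p j' in auto)
  qed auto
  have "finite {(i, j). i < j \<and> j < length w \<and> w ! i < w ! j}"
    by (rule finite_subset[of _ "{..<length w} \<times> {..<length w}"]) auto
  then have "card ?S = card ?A + card ?B"
    unfolding S by (intro card_Un_disjoint) auto
  also have "card ?A = length (filter (\<lambda>x. a < x) w)"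
    by (subst card_image) (auto simp: inj_on_def length_filter_conv_card)
  also have "card ?B = coinv w"
    unfolding coinv_def by (rule card_image) (auto simp: inj_on_def)
  finally show ?thesis unfolding coinv_def .
qed

section \<open>\<open>q\<close>-binomial coefficients as coinversion generating functions\<close>

fun coinv_bool :: "bool list \<Rightarrow> nat" where
  "coinv_bool [] = 0"
| "coinv_bool (b # bs) = (if b then 0 else count_list bs True) + coinv_bool bs"

lemma coinv_bool_append:
  "coinv_bool (bs @ cs) = coinv_bool bs + coinv_bool cs + count_list bs False * count_list cs True"
  by (induction bs) (auto simp: algebra_simps)

lemma coinv_bool_replicate [simp]: "coinv_bool (replicate m b) = 0"
  by (induction m) auto

lemma count_list_map_Not [simp]: "count_list (map Not bs) b = count_list bs (\<not> b)"
  by (induction bs) auto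

lemma coinv_bool_Not_rev: "coinv_bool (map Not (rev bs)) = coinv_bool bs"
  by (induction bs) (auto simp: coinv_bool_append)

definition bool_words :: "nat \<Rightarrow> nat \<Rightarrow> bool list set" where
  "bool_words m k = {bs. length bs = m \<and> count_list bs True = k}"

lemma finite_bool_words: "finite (bool_words m k)"
  by (rule finite_subset[OF _ finite_lists_length_eq[of UNIV m]]) (auto simp: bool_words_def)

lemma count_list_False: "count_list bs False = length bs - count_list (bs :: bool list) True"
  by (induction bs) (auto simp: Suc_diff_le count_le_length)

lemma bool_words_Suc:
  "bool_words (Suc m) k =
     Cons True ` (if k = 0 then {} else bool_words m (k - 1)) \<union> Cons False ` bool_words m k"
proof (rule set_eqI, rule iffI)
  fix bs assume "bs \<in> bool_words (Suc m) k"
  then show "bs \<in> Cons True ` (if k = 0 then {} else bool_words m (k - 1)) \<union> Cons False ` bool_words m k"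
    by (cases bs) (auto simp: bool_words_def split: if_splits)
qed (auto simp: bool_words_def split: if_splits)

lemma rev_in_bool_words [simp]: "rev bs \<in> bool_words m k \<longleftrightarrow> bs \<in> bool_words m k"
  by (simp add: bool_words_def)

definition qbinomial :: "nat \<Rightarrow> nat \<Rightarrow> int poly" where
  "qbinomial m k = (\<Sum>bs\<in>bool_words m k. qX ^ coinv_bool bs)"

lemma qbinomial_0_right: "qbinomial m 0 = 1"
proof -
  have "bool_words m 0 = {replicate m False}"
    by (auto simp: bool_words_def count_list_0_iff intro: replicate_eqI)
  then show ?thesis by (simp add: qbinomial_def)
qed

lemma qbinomial_eq_0: "m < k \<Longrightarrow> qbinomial m k = 0"
proof -
  assume "m < k"
  moreover have "k \<le> m" if "bs \<in> bool_words m k" for bs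
    using that count_le_length[of bs True] by (simp add: bool_words_def)
  ultimately have "bool_words m k = {}" by fastforce
  then show ?thesis by (simp add: qbinomial_def)
qed

lemma qbinomial_Suc_Suc: "qbinomial (Suc m) (Suc k) = qbinomial m k + qX ^ Suc k * qbinomial m (Suc k)"
proof -
  have "qbinomial (Suc m) (Suc k) =
      (\<Sum>bs\<in>bool_words m k. qX ^ coinv_bool (True # bs)) +
      (\<Sum>bs\<in>bool_words m (Suc k). qX ^ coinv_bool (False # bs))"
    unfolding qbinomial_def bool_words_Suc
    by (subst sum.union_disjoint) (auto simp: finite_bool_words sum.reindex)
  also have "\<dots> = qbinomial m k + qX ^ Suc k * qbinomial m (Suc k)"
    by (simp add: qbinomial_def bool_words_def power_add sum_distrib_left mult.assoc)
  finally show ?thesis .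
qed

lemma qint_add: "qint (a + b) = qint a + qX ^ a * qint b"
  by (induction b) (simp_all add: qint_def algebra_simps power_add)

lemma qfact_0 [simp]: "qfact 0 = 1"
  by (simp add: qfact_def)

lemma qfact_Suc: "qfact (Suc m) = qfact m * qint (Suc m)"
  unfolding qfact_def by (simp add: prod.nat_ivl_Suc')

lemma qfact_nonzero: "qfact m \<noteq> 0"
proof -
  have "poly (qint s) 1 = of_nat s" for s
    by (simp add: qint_def qX_def poly_sum)
  then have "poly (qfact m) 1 = fact m"
    by (simp add: qfact_def poly_prod fact_prod)
  then show ?thesis by auto
qed

lemma qbinomial_qfact: "k \<le> m \<Longrightarrow> qbinomial m k * qfact k * qfact (m - k) = qfact m"
proof (induction m arbitrary: k)
  case 0 then show ?case by (simp add: qbinomial_0_right)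
next
  case (Suc m)
  show ?case
  proof (cases k)
    case 0 then show ?thesis by (simp add: qbinomial_0_right)
  next
    case (Suc k')
    have left: "qbinomial m k' * qfact (Suc k') * qfact (m - k') = qfact m * qint (Suc k')"
      using Suc.IH[of k'] Suc.prems Suc by (simp add: qfact_Suc mult_ac)
    have right: "qbinomial m (Suc k') * qfact (Suc k') * qfact (m - k') = qfact m * qint (m - k')"
    proof (cases "Suc k' \<le> m")
      case True
      then have "m - k' = Suc (m - Suc k')" by simp
      then have "qfact (m - k') = qfact (m - Suc k') * qint (m - k')"
        by (simp add: qfact_Suc)
      then show ?thesis using Suc.IH[OF True] by (simp add: mult_ac)
    next
      case False
      then show ?thesis by (simp add: qbinomial_eq_0 qint_def)
    qed
    have "qbinomial (Suc m) k * qfact k * qfact (Suc m - k) =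
        qbinomial m k' * qfact (Suc k') * qfact (m - k') +
        qX ^ Suc k' * (qbinomial m (Suc k') * qfact (Suc k') * qfact (m - k'))"
      unfolding Suc qbinomial_Suc_Suc by (simp add: distrib_right mult.assoc)
    also have "\<dots> = qfact m * (qint (Suc k') + qX ^ Suc k' * qint (m - k'))"
      unfolding left right by (simp add: distrib_left mult.left_commute)
    also have "\<dots> = qfact (Suc m)"
      using Suc.prems Suc qint_add[of "Suc k'" "m - k'"] by (simp add: qfact_Suc del: qint_add)
    finally show ?thesis .
  qed
qed

definition first_true :: "bool list \<Rightarrow> nat" where
  "first_true bs = (LEAST t. t < length bs \<and> bs ! t)"

lemma first_true_replicate_False_Cons [simp]: "first_true (replicate p False @ True # zs) = p"
  unfolding first_true_def
  by (rule Least_equality) (auto simp: nth_append nth_replicate split: if_splits)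

lemma split_first_true:
  assumes "True \<in> set bs"
  obtains zs where "bs = replicate (first_true bs) False @ True # zs"
proof -
  obtain ys zs where bs: "bs = ys @ True # zs" and "True \<notin> set ys"
    using assms by (metis split_list_first)
  then have "ys = replicate (length ys) False"
    by (intro replicate_eqI) auto
  then obtain r where "bs = replicate r False @ True # zs"
    using bs by metis
  then show ?thesis using that by simp
qed

lemma coinv_bool_replicate_False_append:
  "coinv_bool (replicate p False @ bs) = coinv_bool bs + p * count_list bs True"
  by (simp add: coinv_bool_append count_list_False)

lemma bool_words_first_true_eq:
  assumes "0 < k" and "p < m"
  shows "{bs \<in> bool_words m k. first_true bs = p} =
    (\<lambda>zs. replicate p False @ True # zs) ` bool_words (m - Suc p) (k - 1)"
proof (rule set_eqI, rule iffI)
  fix bs assume bs: "bs \<in> {bs \<in> bool_words m k. first_true bs = p}"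
  then have "True \<in> set bs"
    using assms count_notin[of True bs] by (auto simp: bool_words_def)
  then obtain zs where zs: "bs = replicate p False @ True # zs"
    using bs by (auto elim: split_first_true)
  then have "zs \<in> bool_words (m - Suc p) (k - 1)"
    using bs by (auto simp: bool_words_def)
  then show "bs \<in> (\<lambda>zs. replicate p False @ True # zs) ` bool_words (m - Suc p) (k - 1)"
    using zs by blast
qed (use assms in \<open>auto simp: bool_words_def\<close>)

lemma bool_words_prefix_False_eq:
  assumes "p \<le> m"
  shows "{bs \<in> bool_words m k. k = 0 \<or> p \<le> first_true bs} =
    (\<lambda>zs. replicate p False @ zs) ` bool_words (m - p) k"
proof (rule set_eqI, rule iffI)
  fix bs assume bs: "bs \<in> {bs \<in> bool_words m k. k = 0 \<or> p \<le> first_true bs}"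
  have "\<exists>zs. bs = replicate p False @ zs"
  proof (cases "True \<in> set bs")
    case True
    then obtain r where r: "bs = replicate (first_true bs) False @ True # r"
      by (rule split_first_true)
    moreover have "p \<le> first_true bs"
      using bs True by (auto simp: bool_words_def count_list_0_iff)
    ultimately have "bs = replicate p False @ replicate (first_true bs - p) False @ True # r"
      by (metis le_add_diff_inverse replicate_add append.assoc)
    then show ?thesis by blast
  next
    case False
    then have "bs = replicate m False"
      using bs by (intro replicate_eqI) (auto simp: bool_words_def)
    then show ?thesis
      using assms by (metis le_add_diff_inverse replicate_add)
  qed
  then obtain zs where zs: "bs = replicate p False @ zs" by blast
  then have "zs \<in> bool_words (m - p) k"
    using bs by (auto simp: bool_words_def)
  then show "bs \<in> (\<lambda>zs. replicate p False @ zs) ` bool_words (m - p) k"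
    using zs by blast
next
  fix bs assume "bs \<in> (\<lambda>zs. replicate p False @ zs) ` bool_words (m - p) k"
  then obtain zs where bs: "bs = replicate p False @ zs" and zs: "zs \<in> bool_words (m - p) k"
    by blast
  have "p \<le> first_true bs" if "k \<noteq> 0"
  proof -
    have "True \<in> set zs" using zs that count_notin[of True zs] by (auto simp: bool_words_def)
    then obtain r where "zs = replicate (first_true zs) False @ True # r"
      by (rule split_first_true)
    then have "bs = replicate (p + first_true zs) False @ True # r"
      using bs by (metis append.assoc replicate_add)
    then show ?thesis by simp
  qed
  then show "bs \<in> {bs \<in> bool_words m k. k = 0 \<or> p \<le> first_true bs}"
    using bs zs assms by (auto simp: bool_words_def)
qed

lemma sum_bool_words_first_true:
  assumes "0 < k" and "p < m"
  shows "(\<Sum>bs\<in>{bs \<in> bool_words m k. first_true bs = p}. qX ^ coinv_bool bs) =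
    qX ^ (p * k) * qbinomial (m - Suc p) (k - 1)"
proof -
  have "coinv_bool (replicate p False @ True # zs) = coinv_bool zs + p * k"
    if "zs \<in> bool_words (m - Suc p) (k - 1)" for zs
    using that assms by (simp add: coinv_bool_replicate_False_append bool_words_def)
  then show ?thesis using assms
    by (simp add: bool_words_first_true_eq sum.reindex inj_on_def qbinomial_def sum_distrib_left
        power_add mult.commute)
qed

lemma sum_bool_words_prefix_False:
  assumes "p \<le> m"
  shows "(\<Sum>bs\<in>{bs \<in> bool_words m k. k = 0 \<or> p \<le> first_true bs}. qX ^ coinv_bool bs) =
    qX ^ (p * k) * qbinomial (m - p) k"
proof -
  have "coinv_bool (replicate p False @ zs) = coinv_bool zs + p * k" if "zs \<in> bool_words (m - p) k" for zs
    using that by (simp add: coinv_bool_replicate_False_append bool_words_def)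
  then show ?thesis using assms
    by (simp add: bool_words_prefix_False_eq sum.reindex inj_on_def qbinomial_def sum_distrib_left
        power_add mult.commute)
qed

lemma sum_bool_words_rev_Not:
  "(\<Sum>cs\<in>{cs \<in> bool_words m k. P (rev cs)}. qX ^ coinv_bool (map Not cs)) =
    (\<Sum>bs\<in>{bs \<in> bool_words m k. P bs}. qX ^ coinv_bool bs)"
proof -
  have "{cs \<in> bool_words m k. P (rev cs)} = rev ` {bs \<in> bool_words m k. P bs}"
    by (auto intro: image_eqI[where x = "rev _"])
  then show ?thesis by (simp add: sum.reindex coinv_bool_Not_rev)
qed

section \<open>Inserting a letter at prescribed positions\<close>

definition occ_mask :: "'a \<Rightarrow> 'a list \<Rightarrow> bool list" where
  "occ_mask c w = map (\<lambda>x. x = c) w"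

lemma length_occ_mask [simp]: "length (occ_mask c w) = length w"
  by (simp add: occ_mask_def)

lemma count_list_occ_mask_True [simp]: "count_list (occ_mask c w) True = count_list w c"
  by (induction w) (auto simp: occ_mask_def)

fun fill_mask :: "bool list \<Rightarrow> 'a \<Rightarrow> 'a list \<Rightarrow> 'a list" where
  "fill_mask [] c xs = []"
| "fill_mask (b # bs) c xs = (if b then c # fill_mask bs c xs else hd xs # fill_mask bs c (tl xs))"

lemma fill_mask_occ_mask_removeAll: "fill_mask (occ_mask c w) c (removeAll c w) = w"
  by (induction w) (auto simp: occ_mask_def)

lemma occ_mask_fill_mask:
  "c \<notin> set xs \<Longrightarrow> length xs = count_list bs False \<Longrightarrow> occ_mask c (fill_mask bs c xs) = bs"
proof (induction bs arbitrary: xs)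
  case (Cons b bs) then show ?case by (cases b; cases xs) (auto simp: occ_mask_def)
qed (simp add: occ_mask_def)

lemma removeAll_fill_mask:
  "c \<notin> set xs \<Longrightarrow> length xs = count_list bs False \<Longrightarrow> removeAll c (fill_mask bs c xs) = xs"
proof (induction bs arbitrary: xs)
  case (Cons b bs) then show ?case by (cases b; cases xs) auto
qed simp

lemma set_fill_mask:
  "length xs = count_list bs False \<Longrightarrow> set (fill_mask bs c xs) \<subseteq> insert c (set xs)"
proof (induction bs arbitrary: xs)
  case (Cons b bs)
  show ?case
  proof (cases b)
    case False
    then obtain x xs' where "xs = x # xs'" using Cons.prems by (cases xs) auto
    then show ?thesis using Cons False by auto
  qed (use Cons in auto)
qed simp

lemma length_filter_fill_mask:
  "length xs = count_list bs False \<Longrightarrow>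
   length (filter P (fill_mask bs c xs)) = (if P c then count_list bs True else 0) + length (filter P xs)"
proof (induction bs arbitrary: xs)
  case (Cons b bs) then show ?case by (cases b; cases xs) auto
qed simp

lemma coinv_fill_mask_max:
  assumes "length xs = count_list bs False" and "\<forall>x\<in>set xs. x < c"
  shows "coinv (fill_mask bs c xs) = coinv xs + coinv_bool bs"
  using assms
proof (induction bs arbitrary: xs)
  case (Cons b bs)
  show ?case
  proof (cases b)
    case True
    then have "\<forall>y\<in>set (fill_mask bs c xs). \<not> c < y"
      using Cons.prems set_fill_mask[of xs bs c] by fastforce
    then show ?thesis using Cons True by (simp add: coinv_Cons filter_empty_conv)
  next
    case False
    then obtain x xs' where "xs = x # xs'" using Cons.prems by (cases xs) auto
    then show ?thesis using Cons False by (simp add: coinv_Cons length_filter_fill_mask)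
  qed
qed simp

lemma coinv_fill_mask_min:
  assumes "length xs = count_list bs False" and "\<forall>x\<in>set xs. c < x"
  shows "coinv (fill_mask bs c xs) = coinv xs + coinv_bool (map Not bs)"
  using assms
proof (induction bs arbitrary: xs)
  case (Cons b bs)
  show ?case
  proof (cases b)
    case True
    then show ?thesis using Cons by (simp add: coinv_Cons length_filter_fill_mask)
  next
    case False
    then obtain x xs' where "xs = x # xs'" using Cons.prems by (cases xs) auto
    then show ?thesis using Cons False by (simp add: coinv_Cons length_filter_fill_mask)
  qed
qed simp

lemma sum_fill_mask:
  assumes "\<forall>b\<in>B. count_list b False = l" and "\<forall>x\<in>X. length x = l \<and> c \<notin> set x"
  shows "(\<Sum>w\<in>{w. occ_mask c w \<in> B \<and> removeAll c w \<in> X}. g w) = (\<Sum>b\<in>B. \<Sum>x\<in>X. g (fill_mask b c x))"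
proof -
  let ?fill = "\<lambda>(b, x). fill_mask b c x"
  have "{w. occ_mask c w \<in> B \<and> removeAll c w \<in> X} = ?fill ` (B \<times> X)"
  proof (rule set_eqI, rule iffI)
    fix w assume "w \<in> {w. occ_mask c w \<in> B \<and> removeAll c w \<in> X}"
    then show "w \<in> ?fill ` (B \<times> X)"
      by (auto intro!: image_eqI[where x = "(occ_mask c w, removeAll c w)"] simp: fill_mask_occ_mask_removeAll)
  qed (use assms in \<open>auto simp: occ_mask_fill_mask removeAll_fill_mask\<close>)
  moreover have "inj_on ?fill (B \<times> X)"
  proof (rule inj_onI, clarify)
    fix b x b' x' assume mem: "b \<in> B" "x \<in> X" "b' \<in> B" "x' \<in> X"
      and eq: "fill_mask b c x = fill_mask b' c x'"
    from mem have "occ_mask c (fill_mask b c x) = b" "occ_mask c (fill_mask b' c x') = b'"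
      "removeAll c (fill_mask b c x) = x" "removeAll c (fill_mask b' c x') = x'"
      using assms by (simp_all add: occ_mask_fill_mask removeAll_fill_mask)
    then show "b = b' \<and> x = x'" using eq by metis
  qed
  ultimately show ?thesis
    by (simp add: sum.reindex sum.cartesian_product split_def)
qed

lemma sum_coinv_fill_mask_max:
  assumes B: "\<forall>b\<in>B. count_list b False = l" and X: "\<forall>x\<in>X. length x = l \<and> (\<forall>y\<in>set x. y < c)"
  shows "(\<Sum>w\<in>{w. occ_mask c w \<in> B \<and> removeAll c w \<in> X}. qX ^ coinv w) =
    (\<Sum>b\<in>B. qX ^ coinv_bool b) * (\<Sum>x\<in>X. qX ^ coinv x)"
proof -
  have "(\<Sum>w\<in>{w. occ_mask c w \<in> B \<and> removeAll c w \<in> X}. qX ^ coinv w) =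
      (\<Sum>b\<in>B. \<Sum>x\<in>X. qX ^ coinv (fill_mask b c x))"
    using B X by (intro sum_fill_mask) auto
  also have "\<dots> = (\<Sum>b\<in>B. \<Sum>x\<in>X. qX ^ coinv_bool b * qX ^ coinv x)"
    using B X by (intro sum.cong refl) (simp add: coinv_fill_mask_max power_add mult.commute)
  finally show ?thesis by (simp add: sum_product)
qed

lemma sum_coinv_fill_mask_min:
  assumes B: "\<forall>b\<in>B. count_list b False = l" and X: "\<forall>x\<in>X. length x = l \<and> (\<forall>y\<in>set x. c < y)"
  shows "(\<Sum>w\<in>{w. occ_mask c w \<in> B \<and> removeAll c w \<in> X}. qX ^ coinv w) =
    (\<Sum>b\<in>B. qX ^ coinv_bool (map Not b)) * (\<Sum>x\<in>X. qX ^ coinv x)"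
proof -
  have "(\<Sum>w\<in>{w. occ_mask c w \<in> B \<and> removeAll c w \<in> X}. qX ^ coinv w) =
      (\<Sum>b\<in>B. \<Sum>x\<in>X. qX ^ coinv (fill_mask b c x))"
    using B X by (intro sum_fill_mask) auto
  also have "\<dots> = (\<Sum>b\<in>B. \<Sum>x\<in>X. qX ^ coinv_bool (map Not b) * qX ^ coinv x)"
    using B X by (intro sum.cong refl) (simp add: coinv_fill_mask_min power_add mult.commute)
  finally show ?thesis by (simp add: sum_product)
qed

section \<open>Rearrangements of a multiset\<close>

lemma count_list_removeAll: "count_list (removeAll c w) t = (if t = c then 0 else count_list w t)"
  by (induction w) auto

definition perm_words :: "nat \<Rightarrow> (nat \<Rightarrow> nat) \<Rightarrow> nat list set" where
  "perm_words m \<alpha> = {u. set u \<subseteq> {2..m} \<and> (\<forall>t\<in>{2..m}. count_list u t = \<alpha> t)}"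

lemma length_perm_words: "u \<in> perm_words m \<alpha> \<Longrightarrow> length u = (\<Sum>t=2..m. \<alpha> t)"
proof -
  assume u: "u \<in> perm_words m \<alpha>"
  then have "length u = (\<Sum>t=2..m. count_list u t)"
    using sum_count_set[of u "{2..m}"] by (simp add: perm_words_def)
  also have "\<dots> = (\<Sum>t=2..m. \<alpha> t)"
    using u by (simp add: perm_words_def)
  finally show ?thesis .
qed

lemma perm_words_Suc:
  assumes "1 \<le> m"
  shows "perm_words (Suc m) \<alpha> =
    {w. occ_mask (Suc m) w \<in> bool_words ((\<Sum>t=2..m. \<alpha> t) + \<alpha> (Suc m)) (\<alpha> (Suc m)) \<and>
        removeAll (Suc m) w \<in> perm_words m \<alpha>}"
proof -
  have iv: "{2..Suc m} = insert (Suc m) {2..m}" using assms by auto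
  have "set w \<subseteq> {2..Suc m} \<longleftrightarrow> set (removeAll (Suc m) w) \<subseteq> {2..m}" for w :: "nat list"
    using assms by auto
  moreover have "w \<in> perm_words (Suc m) \<alpha> \<Longrightarrow> length w = (\<Sum>t=2..m. \<alpha> t) + \<alpha> (Suc m)" for w
    using length_perm_words[of w "Suc m" \<alpha>] by (simp add: iv)
  moreover have "length (removeAll (Suc m) w) = (\<Sum>t=2..m. \<alpha> t) \<Longrightarrow> count_list w (Suc m) = \<alpha> (Suc m) \<Longrightarrow>
      length w = (\<Sum>t=2..m. \<alpha> t) + \<alpha> (Suc m)" for w
    by (metis count_le_length le_add_diff_inverse2 length_removeAll)
  ultimately show ?thesis
    unfolding perm_words_def bool_words_def
    by (auto simp: iv count_list_removeAll length_perm_words[unfolded perm_words_def])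
qed

lemma sum_perm_words_qfact:
  "(\<Sum>u\<in>perm_words m \<alpha>. qX ^ coinv u) * (\<Prod>t=2..m. qfact (\<alpha> t)) = qfact (\<Sum>t=2..m. \<alpha> t)"
proof (induction m)
  case 0
  have "perm_words 0 \<alpha> = {[]}" by (auto simp: perm_words_def)
  then show ?case by simp
next
  case (Suc m)
  show ?case
  proof (cases "m = 0")
    case True
    then have "perm_words (Suc m) \<alpha> = {[]}" by (auto simp: perm_words_def)
    then show ?thesis using True by simp
  next
    case False
    let ?l = "\<Sum>t=2..m. \<alpha> t" and ?a = "\<alpha> (Suc m)"
    have iv: "{2..Suc m} = insert (Suc m) {2..m}" using False by auto
    have U: "perm_words (Suc m) \<alpha> = {w. occ_mask (Suc m) w \<in> bool_words (?l + ?a) ?a \<and>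
        removeAll (Suc m) w \<in> perm_words m \<alpha>}"
      using False by (intro perm_words_Suc) simp
    have "(\<Sum>u\<in>perm_words (Suc m) \<alpha>. qX ^ coinv u) =
        qbinomial (?l + ?a) ?a * (\<Sum>u\<in>perm_words m \<alpha>. qX ^ coinv u)"
      unfolding U qbinomial_def
      by (rule sum_coinv_fill_mask_max[where l = ?l])
        (auto simp: bool_words_def count_list_False length_perm_words perm_words_def)
    then have "(\<Sum>u\<in>perm_words (Suc m) \<alpha>. qX ^ coinv u) * (\<Prod>t=2..Suc m. qfact (\<alpha> t)) =
        qbinomial (?l + ?a) ?a * qfact ?a * qfact ?l"
      using Suc.IH by (simp add: iv mult_ac)
    also have "\<dots> = qfact (?l + ?a)"
      using qbinomial_qfact[of ?a "?l + ?a"] by simp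
    finally show ?thesis by (simp add: iv add.commute)
  qed
qed

lemma qmultinomial_perm_words:
  "qmultinomial (int (asum n \<alpha>)) (map (\<lambda>t. int (\<alpha> t)) [2..<n]) = (\<Sum>u\<in>perm_words (n - 1) \<alpha>. qX ^ coinv u)"
proof -
  have "(\<Prod>b\<leftarrow>map (\<lambda>t. int (\<alpha> t)) [2..<n]. qfact (nat b)) = (\<Prod>t\<leftarrow>[2..<n]. qfact (\<alpha> t))"
    by (simp add: comp_def)
  also have "\<dots> = (\<Prod>t\<in>set [2..<n]. qfact (\<alpha> t))"
    by (rule prod.distinct_set_conv_list[symmetric]) simp
  also have "\<dots> = (\<Prod>t=2..n-1. qfact (\<alpha> t))"
    by (rule prod.cong) auto
  finally have "(\<Prod>b\<leftarrow>map (\<lambda>t. int (\<alpha> t)) [2..<n]. qfact (nat b)) = (\<Prod>t=2..n-1. qfact (\<alpha> t))" .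
  then have "qmultinomial (int (asum n \<alpha>)) (map (\<lambda>t. int (\<alpha> t)) [2..<n]) =
      qfact (asum n \<alpha>) div (\<Prod>t=2..n-1. qfact (\<alpha> t))"
    unfolding qmultinomial_def by simp
  also have "\<dots> = (\<Sum>u\<in>perm_words (n - 1) \<alpha>. qX ^ coinv u)"
    unfolding asum_def sum_perm_words_qfact[symmetric] by (simp add: qfact_nonzero)
  finally show ?thesis .
qed

lemma qmultinomial_diff_perm_words:
  "asum n \<alpha> \<le> N \<Longrightarrow> qmultinomial (int N - int (N - asum n \<alpha>)) (map (\<lambda>t. int (\<alpha> t)) [2..<n]) =
    (\<Sum>u\<in>perm_words (n - 1) \<alpha>. qX ^ coinv u)"
  by (simp add: of_nat_diff qmultinomial_perm_words)

lemma qmultinomial_3: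
  assumes "a + b + c = m"
  shows "qmultinomial (int m) [int a, int b, int c] = qbinomial m a * qbinomial (b + c) c"
proof -
  have "m - a = b + c" "a \<le> m" using assms by auto
  then have "qbinomial m a * qfact a * qfact (b + c) = qfact m"
    using qbinomial_qfact[of a m] by simp
  moreover have "qbinomial (b + c) c * qfact c * qfact b = qfact (b + c)"
    using qbinomial_qfact[of c "b + c"] by simp
  ultimately have "qfact m = qbinomial m a * qbinomial (b + c) c * (qfact a * (qfact b * qfact c))"
    by (metis (no_types, lifting) mult_ac)
  then show ?thesis
    unfolding qmultinomial_def by (simp add: qfact_nonzero)
qed

section \<open>The words of \<open>W\<^sub>k\<close>\<close>

lemma Wset_eq_masks:
  assumes "2 \<le> n"
  shows "Wset n \<alpha> N k =
    {w. occ_mask n w \<in> bool_words N k \<and>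
        occ_mask 1 (removeAll n w) \<in> bool_words (N - k) (N - asum n \<alpha> - k) \<and>
        removeAll 1 (removeAll n w) \<in> perm_words (n - 1) \<alpha>}"
proof -
  have "x \<in> {1..n} \<longleftrightarrow> x \<in> {n, 1} \<union> {2..n - 1}" for x
    using assms by auto
  then have "set w \<subseteq> {1..n} \<longleftrightarrow> set w - {n} - {1} \<subseteq> {2..n - 1}" for w :: "nat list"
    by blast
  then show ?thesis
    using assms by (auto simp: Wset_def bool_words_def perm_words_def length_removeAll count_list_removeAll)
qed

lemma pn_eq_first_true: "pn n w = first_true (occ_mask n w) + 1"
  unfolding pn_def first_true_def occ_mask_def
  by (intro arg_cong[where f = "\<lambda>x. x + 1"] arg_cong[where f = Least]) auto

lemma p1_eq_first_true: "p1 n w = first_true (rev (occ_mask 1 (removeAll n w))) + 1"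
proof -
  have "filter (\<lambda>x. x \<noteq> n) w = removeAll n w"
    by (induction w) auto
  then show ?thesis
    unfolding p1_def first_true_def occ_mask_def Let_def
  by (intro arg_cong[where f = "\<lambda>x. x + 1"] arg_cong[where f = Least]) (auto simp: rev_map)
qed

lemma sum_Wset_masks:
  assumes "2 \<le> n" and "k + asum n \<alpha> \<le> N"
    and A: "A \<subseteq> bool_words N k" and C: "C \<subseteq> bool_words (N - k) (N - asum n \<alpha> - k)"
  shows "(\<Sum>w\<in>{w \<in> Wset n \<alpha> N k. occ_mask n w \<in> A \<and> occ_mask 1 (removeAll n w) \<in> C}. qX ^ coinv w) =
    (\<Sum>b\<in>A. qX ^ coinv_bool b) * (\<Sum>c\<in>C. qX ^ coinv_bool (map Not c)) *
    (\<Sum>u\<in>perm_words (n - 1) \<alpha>. qX ^ coinv u)"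
proof -
  let ?V = "{v. occ_mask 1 v \<in> C \<and> removeAll 1 v \<in> perm_words (n - 1) \<alpha>}"
  have "{w \<in> Wset n \<alpha> N k. occ_mask n w \<in> A \<and> occ_mask 1 (removeAll n w) \<in> C} =
      {w. occ_mask n w \<in> A \<and> removeAll n w \<in> ?V}"
    using assms by (auto simp: Wset_eq_masks)
  also have "(\<Sum>w\<in>\<dots>. qX ^ coinv w) = (\<Sum>b\<in>A. qX ^ coinv_bool b) * (\<Sum>v\<in>?V. qX ^ coinv v)"
  proof (rule sum_coinv_fill_mask_max[where l = "N - k"])
    show "\<forall>b\<in>A. count_list b False = N - k"
      using A by (auto simp: bool_words_def count_list_False)
    have "y < n" if "v \<in> ?V" "y \<in> set v" for v y
    proof (cases "y = 1")
      case False
      then have "y \<in> set (removeAll 1 v)" using that(2) by simp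
      moreover have "set (removeAll 1 v) \<subseteq> {2..n - 1}" using that(1) by (simp add: perm_words_def)
      ultimately have "y \<in> {2..n - 1}" by blast
      then show ?thesis using assms(1) by auto
    qed (use assms(1) in simp)
    then show "\<forall>v\<in>?V. length v = N - k \<and> (\<forall>y\<in>set v. y < n)"
      using C by (auto simp: bool_words_def)
  qed
  also have "(\<Sum>v\<in>?V. qX ^ coinv v) =
      (\<Sum>c\<in>C. qX ^ coinv_bool (map Not c)) * (\<Sum>u\<in>perm_words (n - 1) \<alpha>. qX ^ coinv u)"
  proof (rule sum_coinv_fill_mask_min[where l = "asum n \<alpha>"])
    show "\<forall>c\<in>C. count_list c False = asum n \<alpha>"
      using C assms by (auto simp: bool_words_def count_list_False)
    show "\<forall>u\<in>perm_words (n - 1) \<alpha>. length u = asum n \<alpha> \<and> (\<forall>y\<in>set u. 1 < y)"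
      by (auto simp: length_perm_words asum_def perm_words_def)
  qed
  finally show ?thesis by (simp add: mult.assoc)
qed

lemma sum_Wgt_p1:
  fixes n N :: nat and \<alpha> :: "nat \<Rightarrow> nat"
  defines "L \<equiv> N - asum n \<alpha>"
  assumes "2 \<le> n" and "k < L" and "1 \<le> i" and "i \<le> asum n \<alpha> + 1"
  shows "(\<Sum>w\<in>{w \<in> Wgt n \<alpha> N k. p1 n w = i}. qX ^ coinv w) =
    qX ^ (i * k + (i - 1) * (L - k)) * qbinomial (N - i) k * qbinomial (N - k - i) (L - k - 1) *
    (\<Sum>u\<in>perm_words (n - 1) \<alpha>. qX ^ coinv u)"
proof -
  let ?A = "{b \<in> bool_words N k. k = 0 \<or> i \<le> first_true b}"
  let ?C = "{c \<in> bool_words (N - k) (L - k). first_true (rev c) = i - 1}"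
  have W: "{w \<in> Wgt n \<alpha> N k. p1 n w = i} =
      {w \<in> Wset n \<alpha> N k. occ_mask n w \<in> ?A \<and> occ_mask 1 (removeAll n w) \<in> ?C}"
    using assms by (auto simp: Wgt_def Wset_eq_masks pn_eq_first_true p1_eq_first_true)
  have A: "(\<Sum>b\<in>?A. qX ^ coinv_bool b) = qX ^ (i * k) * qbinomial (N - i) k"
    using assms by (intro sum_bool_words_prefix_False) auto
  have "(\<Sum>c\<in>?C. qX ^ coinv_bool (map Not c)) =
      (\<Sum>b\<in>{b \<in> bool_words (N - k) (L - k). first_true b = i - 1}. qX ^ coinv_bool b)"
    by (rule sum_bool_words_rev_Not)
  also have "\<dots> = qX ^ ((i - 1) * (L - k)) * qbinomial (N - k - Suc (i - 1)) (L - k - 1)"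
    using assms by (intro sum_bool_words_first_true) auto
  finally have C: "(\<Sum>c\<in>?C. qX ^ coinv_bool (map Not c)) =
      qX ^ ((i - 1) * (L - k)) * qbinomial (N - k - Suc (i - 1)) (L - k - 1)" .
  have "(\<Sum>w\<in>{w \<in> Wset n \<alpha> N k. occ_mask n w \<in> ?A \<and> occ_mask 1 (removeAll n w) \<in> ?C}. qX ^ coinv w) =
      (\<Sum>b\<in>?A. qX ^ coinv_bool b) * (\<Sum>c\<in>?C. qX ^ coinv_bool (map Not c)) *
      (\<Sum>u\<in>perm_words (n - 1) \<alpha>. qX ^ coinv u)"
    using assms by (intro sum_Wset_masks) auto
  then show ?thesis
    unfolding W A C using assms by (simp add: power_add mult_ac)
qed

lemma sum_Wle_pn:
  fixes n N :: nat and \<alpha> :: "nat \<Rightarrow> nat"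
  defines "L \<equiv> N - asum n \<alpha>"
  assumes "2 \<le> n" and "asum n \<alpha> < N" and "1 \<le> k" and "k \<le> L" and "1 \<le> j" and "j \<le> asum n \<alpha> + 1"
  shows "(\<Sum>w\<in>{w \<in> Wle n \<alpha> N k. pn n w = j}. qX ^ coinv w) =
    qX ^ ((j - 1) * k + (j - 1) * (L - k)) * qbinomial (N - j) (k - 1) *
    qbinomial (N - k - (j - 1)) (L - k) * (\<Sum>u\<in>perm_words (n - 1) \<alpha>. qX ^ coinv u)"
proof -
  let ?A = "{b \<in> bool_words N k. first_true b = j - 1}"
  let ?C = "{c \<in> bool_words (N - k) (L - k). L - k = 0 \<or> j - 1 \<le> first_true (rev c)}"
  have W: "{w \<in> Wle n \<alpha> N k. pn n w = j} =
      {w \<in> Wset n \<alpha> N k. occ_mask n w \<in> ?A \<and> occ_mask 1 (removeAll n w) \<in> ?C}"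
    using assms by (auto simp: Wle_def Wset_eq_masks pn_eq_first_true p1_eq_first_true)
  have A: "(\<Sum>b\<in>?A. qX ^ coinv_bool b) = qX ^ ((j - 1) * k) * qbinomial (N - j) (k - 1)"
    using assms by (simp add: sum_bool_words_first_true)
  have "(\<Sum>c\<in>?C. qX ^ coinv_bool (map Not c)) =
      (\<Sum>b\<in>{b \<in> bool_words (N - k) (L - k). L - k = 0 \<or> j - 1 \<le> first_true b}. qX ^ coinv_bool b)"
    by (rule sum_bool_words_rev_Not)
  also have "\<dots> = qX ^ ((j - 1) * (L - k)) * qbinomial (N - k - (j - 1)) (L - k)"
    using assms by (intro sum_bool_words_prefix_False) auto
  finally have C: "(\<Sum>c\<in>?C. qX ^ coinv_bool (map Not c)) =
      qX ^ ((j - 1) * (L - k)) * qbinomial (N - k - (j - 1)) (L - k)" .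
  have "(\<Sum>w\<in>{w \<in> Wset n \<alpha> N k. occ_mask n w \<in> ?A \<and> occ_mask 1 (removeAll n w) \<in> ?C}. qX ^ coinv w) =
      (\<Sum>b\<in>?A. qX ^ coinv_bool b) * (\<Sum>c\<in>?C. qX ^ coinv_bool (map Not c)) *
      (\<Sum>u\<in>perm_words (n - 1) \<alpha>. qX ^ coinv u)"
    using assms by (intro sum_Wset_masks) auto
  then show ?thesis
    unfolding W A C using assms by (simp add: power_add mult_ac)
qed

lemma sum_quinv':
  "(\<Sum>w\<in>S. qX ^ quinv' n \<alpha> ell k w) =
    qX ^ ((\<Sum>t=ell..n-1. \<alpha> t choose 2) + (k choose 2)) * (\<Sum>w\<in>S. qX ^ coinv w)"
  unfolding sum_distrib_left by (intro sum.cong) (simp_all add: quinv'_def power_add mult_ac)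

lemma Wgt_p1_generating_function:
  fixes n N ell :: nat and \<alpha> :: "nat \<Rightarrow> nat"
  defines "L \<equiv> N - asum n \<alpha>"
  assumes "2 \<le> n" and "k < L" and "1 \<le> i" and "i \<le> N - L + 1"
  shows "(\<Sum>w\<in>{w \<in> Wgt n \<alpha> N k. p1 n w = i}. qX ^ quinv' n \<alpha> ell k w) =
    qX ^ ((\<Sum>t=ell..n-1. \<alpha> t choose 2) + ((k + 1) choose 2) + (i - 1) * L) *
    qmultinomial (int N - int L) (map (\<lambda>t. int (\<alpha> t)) [2..<n]) *
    qmultinomial (int N - int i) [int k, int N - int L - int i + 1, int L - int k - 1]"
proof -
  have L: "L + asum n \<alpha> = N"
    using assms by (simp add: L_def)
  have "int N - int i = int (N - i)" "int N - int L - int i + 1 = int (N - L + 1 - i)"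
    "int L - int k - 1 = int (L - k - 1)" "N - L + 1 - i + (L - k - 1) = N - k - i"
    "k + (N - L + 1 - i) + (L - k - 1) = N - i"
    using assms L by auto
  then have multi: "qmultinomial (int N - int i) [int k, int N - int L - int i + 1, int L - int k - 1] =
      qbinomial (N - i) k * qbinomial (N - k - i) (L - k - 1)"
    by (simp only: qmultinomial_3)
  have "k + (L - k) = L"
    using assms by linarith
  then have "(i - 1) * k + (i - 1) * (L - k) = (i - 1) * L"
    by (metis add_mult_distrib2)
  moreover have "i * k = k + (i - 1) * k"
    using assms by (cases i) auto
  ultimately have "(k choose 2) + (i * k + (i - 1) * (L - k)) = ((k + 1) choose 2) + (i - 1) * L"
    by (simp add: numeral_2_eq_2)
  then have power: "qX ^ (B + ((k + 1) choose 2) + (i - 1) * L) =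
      qX ^ (B + (k choose 2)) * qX ^ (i * k + (i - 1) * (L - k))" for B
    by (metis add.assoc power_add)
  have perm: "qmultinomial (int N - int L) (map (\<lambda>t. int (\<alpha> t)) [2..<n]) =
      (\<Sum>u\<in>perm_words (n - 1) \<alpha>. qX ^ coinv u)"
    using assms unfolding L_def by (intro qmultinomial_diff_perm_words) simp
  have "(\<Sum>w\<in>{w \<in> Wgt n \<alpha> N k. p1 n w = i}. qX ^ coinv w) =
      qX ^ (i * k + (i - 1) * (L - k)) * qbinomial (N - i) k * qbinomial (N - k - i) (L - k - 1) *
      (\<Sum>u\<in>perm_words (n - 1) \<alpha>. qX ^ coinv u)"
    using assms unfolding L_def by (intro sum_Wgt_p1) auto
  then show ?thesis
    unfolding sum_quinv' multi perm power by (simp only: mult_ac)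
qed

lemma Wle_pn_generating_function:
  fixes n N ell :: nat and \<alpha> :: "nat \<Rightarrow> nat"
  defines "L \<equiv> N - asum n \<alpha>"
  assumes "2 \<le> n" and "asum n \<alpha> < N" and "1 \<le> k" and "k \<le> L" and "1 \<le> j" and "j \<le> N - L + 1"
  shows "(\<Sum>w\<in>{w \<in> Wle n \<alpha> N k. pn n w = j}. qX ^ quinv' n \<alpha> ell k w) =
    qX ^ ((\<Sum>t=ell..n-1. \<alpha> t choose 2) + (k choose 2) + (j - 1) * L) *
    qmultinomial (int N - int L) (map (\<lambda>t. int (\<alpha> t)) [2..<n]) *
    qmultinomial (int N - int j) [int k - 1, int N - int L - int j + 1, int L - int k]"
proof -
  have L: "L + asum n \<alpha> = N"
    using assms by (simp add: L_def)
  have "int N - int j = int (N - j)" "int N - int L - int j + 1 = int (N - L + 1 - j)"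
    "int k - 1 = int (k - 1)" "int L - int k = int (L - k)" "N - L + 1 - j + (L - k) = N - k - (j - 1)"
    "k - 1 + (N - L + 1 - j) + (L - k) = N - j"
    using assms L by auto
  then have multi: "qmultinomial (int N - int j) [int k - 1, int N - int L - int j + 1, int L - int k] =
      qbinomial (N - j) (k - 1) * qbinomial (N - k - (j - 1)) (L - k)"
    by (simp only: qmultinomial_3)
  have "k + (L - k) = L"
    using assms by linarith
  then have "(j - 1) * k + (j - 1) * (L - k) = (j - 1) * L"
    by (metis add_mult_distrib2)
  then have power: "qX ^ (B + (k choose 2) + (j - 1) * L) =
      qX ^ (B + (k choose 2)) * qX ^ ((j - 1) * k + (j - 1) * (L - k))" for B
    by (metis add.assoc power_add)
  have perm: "qmultinomial (int N - int L) (map (\<lambda>t. int (\<alpha> t)) [2..<n]) =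
      (\<Sum>u\<in>perm_words (n - 1) \<alpha>. qX ^ coinv u)"
    using assms unfolding L_def by (intro qmultinomial_diff_perm_words) simp
  have "(\<Sum>w\<in>{w \<in> Wle n \<alpha> N k. pn n w = j}. qX ^ coinv w) =
      qX ^ ((j - 1) * k + (j - 1) * (L - k)) * qbinomial (N - j) (k - 1) *
      qbinomial (N - k - (j - 1)) (L - k) * (\<Sum>u\<in>perm_words (n - 1) \<alpha>. qX ^ coinv u)"
    using assms unfolding L_def by (intro sum_Wle_pn) auto
  then show ?thesis
    unfolding sum_quinv' multi perm power by (simp only: mult_ac)
qed

theorem mainTheorem18:
  fixes n N ell :: nat and \<alpha> :: "nat \<Rightarrow> nat"
  assumes "n \<ge> 3"
    and "\<forall>i\<in>{2..n-1}. \<alpha> i > 0"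
    and "N > asum n \<alpha>"
    and "2 \<le> ell" and "ell \<le> n"
  defines "L \<equiv> N - asum n \<alpha>"
  shows "(\<forall>k i. k \<le> L - 1 \<and> 1 \<le> i \<and> i \<le> N - L + 1 \<longrightarrow>
           (\<Sum>w\<in>{w \<in> Wgt n \<alpha> N k. p1 n w = i}. qX ^ quinv' n \<alpha> ell k w) =
           qX ^ ((\<Sum>t=ell..n-1. \<alpha> t choose 2) + ((k + 1) choose 2) + (i - 1) * L) *
           qmultinomial (int N - int L) (map (\<lambda>t. int (\<alpha> t)) [2..<n]) *
           qmultinomial (int N - int i) [int k, int N - int L - int i + 1, int L - int k - 1])
       \<and> (\<forall>k j. 1 \<le> k \<and> k \<le> L \<and> 1 \<le> j \<and> j \<le> N - L + 1 \<longrightarrow>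
           (\<Sum>w\<in>{w \<in> Wle n \<alpha> N k. pn n w = j}. qX ^ quinv' n \<alpha> ell k w) =
           qX ^ ((\<Sum>t=ell..n-1. \<alpha> t choose 2) + (k choose 2) + (j - 1) * L) *
           qmultinomial (int N - int L) (map (\<lambda>t. int (\<alpha> t)) [2..<n]) *
           qmultinomial (int N - int j) [int k - 1, int N - int L - int j + 1, int L - int k])"
  unfolding L_def
  by (intro conjI allI impI Wgt_p1_generating_function Wle_pn_generating_function; use assms in auto)

end
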